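(* Let $\mathbb L$ be a set of infinite cardinality $\kappa$. Let $d\in\mathbb I$, let $n\ge1$, and for each $t=1,\dots,n$ let $S_t$ be a finite index set and $A^{st}\in\mathbb W$ ($s\in S_t$) sets with $|A^{st}|=\kappa_t$, where $\aleph_0\le\kappa_t<\kappa_u\le\kappa$ whenever $t<u$. Then there exists $i\in\mathbb I$ with $d\subseteq i$ such that $|A^{st}_i|<|A^{ru}_i|$ for all $t<u$, $s\in S_t$, $r\in S_u$.
   Context: A point over $\mathbb L$ is either an element of $\mathbb L$ or a finite tuple $(x_1,\dots,x_n)$, $n\ge1$, of points over $\mathbb L$ ($\mathbb L$ contains no tuples of points); $P$ is the set of all points; $supp(x)=\{x\}$ for $x\in\mathbb L$ and $supp(x_1,\dots,x_n)=\bigcup_k supp(x_k)$. $\mathbb W$ is the family of finitary point sets: $A\subseteq P$ such that $\{a\in A:supp(a)=i\}$ is finite for every finite $i\subseteq\mathbb L$. $\mathbb I=[\mathbb L]^{<\omega}$ is the set of finite subsets of $\mathbb L$, and $A_i=\{a\in A:supp(a)\subseteq i\}$ for $A\in\mathbb W$, $i\in\mathbb I$. *)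

theory Defs
  imports Main
begin

text \<open>Points over L, where L is modelled as the universe of the type 'a.
  A point is an atom of L or a tuple (list) of points; only non-empty tuples
  are points (predicate is_point).\<close>

datatype 'a pt = Atom 'a | Tup "'a pt list"

fun is_point :: "'a pt \<Rightarrow> bool" where
  "is_point (Atom x) = True"
| "is_point (Tup xs) = (xs \<noteq> [] \<and> (\<forall>y\<in>set xs. is_point y))"

definition Points :: "'a pt set" where
  "Points = {p. is_point p}"

fun supp :: "'a pt \<Rightarrow> 'a set" where
  "supp (Atom x) = {x}"
| "supp (Tup xs) = \<Union> (supp ` set xs)"

text \<open>Finitary point sets (the family W).\<close>
definition finitary :: "'a pt set \<Rightarrow> bool" where
  "finitary A \<longleftrightarrow> A \<subseteq> Points \<and> (\<forall>i. finite i \<longrightarrow> finite {a\<in>A. supp a = i})"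

definition restr :: "'a pt set \<Rightarrow> 'a set \<Rightarrow> 'a pt set" where
  "restr A i = {a\<in>A. supp a \<subseteq> i}"

end

theory Submission
  imports
    Defs
    "HOL-Algebra.Free_Abelian_Groups"
begin

text \<open>Let \<open>C\<^sub>u = supp_below A S u\<close> be the union of the supports of all \<open>A\<^sup>st\<close>
  with \<open>t < u\<close>. Since \<open>|C\<^sub>u| \<le> \<kappa>\<^sub>u\<^sub>-\<^sub>1 < \<kappa>\<^sub>u\<close> and a point meets \<open>C\<^sub>u\<close> in a finite set,
  some finite \<open>F \<subseteq> C\<^sub>u\<close> is the trace on \<open>C\<^sub>u\<close> of infinitely many points of \<open>A\<^sup>ru\<close>.
  Start with \<open>i\<close> containing \<open>d\<close> and all these traces, and treat \<open>u = 2, \<dots>, n\<close> in turn: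
  adding the supports of sufficiently many points of each fibre makes every \<open>A\<^sup>ru\<^sub>i\<close>
  larger than all earlier \<open>A\<^sup>st\<^sub>i\<close>, and leaves these earlier sets unchanged, because
  the new atoms in \<open>C\<^sub>u\<close> already lie in \<open>i\<close>.\<close>

lemma finite_supp: "finite (supp p)"
  by (induction p) auto

lemma finite_restr:
  assumes "finitary A" "finite i"
  shows "finite (restr A i)"
proof -
  have "restr A i \<subseteq> (\<Union>j\<in>Pow i. {a\<in>A. supp a = j})"
    unfolding restr_def by auto
  moreover have "finite {a\<in>A. supp a = j}" if "j \<in> Pow i" for j
    using assms that finite_subset unfolding finitary_def by blast
  ultimately show ?thesis
    using assms(2) by (meson finite_Pow_iff finite_UN_I finite_subset)
qed

lemma restr_eq_if_new_atoms_outside: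
  assumes "i \<subseteq> j" "j \<inter> (\<Union>a\<in>A. supp a) \<subseteq> i"
  shows "restr A j = restr A i"
  using assms unfolding restr_def by blast

lemma finite_card_of_ordLeq_infinite:
  "finite A \<Longrightarrow> infinite K \<Longrightarrow> (card_of A, card_of K) \<in> ordLeq"
  using finite_ordLess_infinite2 ordLess_imp_ordLeq by blast

lemma card_of_UN_supp_ordLeq:
  assumes "infinite K" "(card_of A, card_of K) \<in> ordLeq"
  shows "(card_of (\<Union>a\<in>A. supp a), card_of K) \<in> ordLeq"
  using assms card_of_UNION_ordLeq_infinite finite_card_of_ordLeq_infinite finite_supp by blast

lemma exists_infinite_supp_fibre:
  assumes K: "infinite K" and CK: "(card_of C, card_of K) \<in> ordLeq"
    and KX: "(card_of K, card_of X) \<in> ordLess"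
  shows "\<exists>F. finite F \<and> infinite {a\<in>X. supp a \<inter> C = F}"
proof (rule ccontr)
  assume no_fibre: "\<not> ?thesis"
  note fin_le_K = finite_card_of_ordLeq_infinite[OF _ K]
  have X_fibres: "X \<subseteq> (\<Union>F\<in>Fpow C. {a\<in>X. supp a \<inter> C = F})"
    using finite_supp by (auto simp: Fpow_def)
  have "(card_of (Fpow C), card_of K) \<in> ordLeq"
  proof (cases "finite C")
    case True
    then have "finite (Fpow C)"
      by (simp add: Fpow_def)
    then show ?thesis
      by (rule fin_le_K)
  next
    case False
    then show ?thesis
      using CK card_of_Fpow_infinite ordIso_ordLeq_trans by blast
  qed
  moreover have "\<forall>F\<in>Fpow C. (card_of {a\<in>X. supp a \<inter> C = F}, card_of K) \<in> ordLeq"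
  proof
    fix F assume "F \<in> Fpow C"
    then have "finite {a\<in>X. supp a \<inter> C = F}"
      using no_fibre by (simp add: Fpow_def)
    then show "(card_of {a\<in>X. supp a \<inter> C = F}, card_of K) \<in> ordLeq"
      by (rule fin_le_K)
  qed
  ultimately have "(card_of (\<Union>F\<in>Fpow C. {a\<in>X. supp a \<inter> C = F}), card_of K) \<in> ordLeq"
    by (rule card_of_UNION_ordLeq_infinite[OF K])
  then have "(card_of X, card_of K) \<in> ordLeq"
    using X_fibres card_of_mono1 ordLeq_transitive by blast
  then show False
    using KX not_ordLess_ordLeq by blast
qed

definition supp_below :: "(nat \<Rightarrow> 'b \<Rightarrow> 'a pt set) \<Rightarrow> (nat \<Rightarrow> 'b set) \<Rightarrow> nat \<Rightarrow> 'a set" where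
  "supp_below A S u = (\<Union>t\<in>{1..<u}. \<Union>s\<in>S t. \<Union>a\<in>A t s. supp a)"

lemma card_of_supp_below_ordLeq:
  assumes K: "infinite K"
    and S: "\<forall>t\<in>{1..<u}. finite (S t)"
    and AK: "\<forall>t\<in>{1..<u}. \<forall>s\<in>S t. (card_of (A t s), card_of K) \<in> ordLeq"
  shows "(card_of (supp_below A S u), card_of K) \<in> ordLeq"
proof -
  note finite_le_K = finite_card_of_ordLeq_infinite[OF _ K]
  have "(card_of (\<Union>s\<in>S t. \<Union>a\<in>A t s. supp a), card_of K) \<in> ordLeq" if t: "t \<in> {1..<u}" for t
    using card_of_UNION_ordLeq_infinite[OF K] finite_le_K S t card_of_UN_supp_ordLeq[OF K] AK
    by (metis (no_types, lifting))
  then show ?thesis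
    unfolding supp_below_def using card_of_UNION_ordLeq_infinite[OF K] finite_le_K
    by (metis (no_types, lifting) finite_atLeastLessThan)
qed

lemma exists_infinite_supp_below_fibre:
  assumes k: "Card_order k" "(natLeq, k) \<in> ordLeq"
    and S: "\<forall>t\<in>{1..<u}. finite (S t)"
    and A_le: "\<forall>t\<in>{1..<u}. \<forall>s\<in>S t. (card_of (A t s), k) \<in> ordLeq"
    and less_X: "(k, card_of X) \<in> ordLess"
  shows "\<exists>F. finite F \<and> infinite {a\<in>X. supp a \<inter> supp_below A S u = F}"
proof -
  have Field_k: "(k, card_of (Field k)) \<in> ordIso"
    using card_of_Field_ordIso[OF k(1)] by (rule ordIso_symmetric)
  have K: "infinite (Field k)"
    using ordLeq_ordIso_trans[OF k(2) Field_k] infinite_iff_natLeq_ordLeq by blast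
  have "\<forall>t\<in>{1..<u}. \<forall>s\<in>S t. (card_of (A t s), card_of (Field k)) \<in> ordLeq"
    using A_le ordLeq_ordIso_trans[OF _ Field_k] by blast
  with K S have "(card_of (supp_below A S u), card_of (Field k)) \<in> ordLeq"
    by (rule card_of_supp_below_ordLeq)
  moreover have "(card_of (Field k), card_of X) \<in> ordLess"
    using ordIso_ordLess_trans[OF ordIso_symmetric[OF Field_k] less_X] .
  ultimately show ?thesis
    by (rule exists_infinite_supp_fibre[OF K])
qed

lemma infinite_supp_inter_subset_mono:
  assumes "infinite {a\<in>X. supp a \<inter> C \<subseteq> i}" "i \<subseteq> j"
  shows "infinite {a\<in>X. supp a \<inter> C \<subseteq> j}"
  using assms(1) by (rule infinite_super[rotated]) (use assms(2) in blast)

text \<open>New atoms are only taken from supports that meet \<open>C\<close> inside \<open>i\<close>, so every point set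
  supported in \<open>C\<close> keeps its restriction.\<close>

lemma exists_restr_extension:
  assumes i: "finite i" and R: "finite R"
    and N: "\<forall>r\<in>R. finitary (N r)"
    and fibre: "\<forall>r\<in>R. infinite {a\<in>N r. supp a \<inter> C \<subseteq> i}"
  obtains j where "finite j" "i \<subseteq> j"
    "\<And>B. (\<Union>a\<in>B. supp a) \<subseteq> C \<Longrightarrow> restr B j = restr B i"
    "\<And>r. r \<in> R \<Longrightarrow> k \<le> card (restr (N r) j)"
proof -
  have "\<forall>r\<in>R. \<exists>G. finite G \<and> card G = k \<and> G \<subseteq> {a\<in>N r. supp a \<inter> C \<subseteq> i}"
    using fibre infinite_arbitrarily_large by blast
  then obtain G where G: "\<forall>r\<in>R. finite (G r) \<and> card (G r) = k \<and> G r \<subseteq> {a\<in>N r. supp a \<inter> C \<subseteq> i}"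
    by (rule bchoice[elim_format]) blast
  define j where "j = i \<union> (\<Union>r\<in>R. \<Union>a\<in>G r. supp a)"
  have "finite j"
    unfolding j_def using i R G finite_supp by auto
  moreover have "i \<subseteq> j"
    unfolding j_def by blast
  moreover have "restr B j = restr B i" if "(\<Union>a\<in>B. supp a) \<subseteq> C" for B
  proof (rule restr_eq_if_new_atoms_outside)
    have "j \<inter> C \<subseteq> i"
      unfolding j_def using G by auto
    then show "j \<inter> (\<Union>a\<in>B. supp a) \<subseteq> i"
      using that by blast
  qed (rule \<open>i \<subseteq> j\<close>)
  moreover have "k \<le> card (restr (N r) j)" if r: "r \<in> R" for r
  proof -
    have "G r \<subseteq> restr (N r) j"
      using G r unfolding restr_def j_def by auto
    then have "card (G r) \<le> card (restr (N r) j)"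
      using N r finite_restr[OF _ \<open>finite j\<close>] card_mono by blast
    then show ?thesis
      using G r by simp
  qed
  ultimately show ?thesis
    by (rule that)
qed

definition restr_cards_increasing ::
    "nat \<Rightarrow> (nat \<Rightarrow> 'b set) \<Rightarrow> (nat \<Rightarrow> 'b \<Rightarrow> 'a pt set) \<Rightarrow> 'a set \<Rightarrow> bool" where
  "restr_cards_increasing m S A i \<longleftrightarrow> (\<forall>t\<in>{1..m}. \<forall>u\<in>{1..m}. t < u \<longrightarrow>
     (\<forall>s\<in>S t. \<forall>r\<in>S u. card (restr (A t s) i) < card (restr (A u r) i)))"

lemma restr_cards_increasing_extend:
  assumes i: "finite i" and increasing: "restr_cards_increasing m S A i"
    and S: "\<forall>t\<in>{1..Suc m}. finite (S t)"
    and A: "\<forall>t\<in>{1..Suc m}. \<forall>s\<in>S t. finitary (A t s)"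
    and fibre: "\<forall>r\<in>S (Suc m). infinite {a\<in>A (Suc m) r. supp a \<inter> supp_below A S (Suc m) \<subseteq> i}"
  obtains j where "finite j" "i \<subseteq> j" "restr_cards_increasing (Suc m) S A j"
proof -
  define old where "old = (\<Union>t\<in>{1..m}. \<Union>s\<in>S t. restr (A t s) i)"
  have "finite old"
    unfolding old_def using S A i by (force intro: finite_restr)
  then have old_le: "card (restr (A t s) i) \<le> card old" if "t \<in> {1..m}" "s \<in> S t" for t s
    unfolding old_def using that by (intro card_mono) auto
  have "finite (S (Suc m))" "\<forall>r\<in>S (Suc m). finitary (A (Suc m) r)"
    using S A by auto
  then obtain j where j: "finite j" "i \<subseteq> j"
    and restr_unchanged: "\<And>B. (\<Union>a\<in>B. supp a) \<subseteq> supp_below A S (Suc m) \<Longrightarrow> restr B j = restr B i"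
    and new_large: "\<And>r. r \<in> S (Suc m) \<Longrightarrow> Suc (card old) \<le> card (restr (A (Suc m) r) j)"
    using fibre by (rule exists_restr_extension[OF i, where k = "Suc (card old)"]) blast
  have old_unchanged: "restr (A t s) j = restr (A t s) i" if "t \<in> {1..m}" "s \<in> S t" for t s
    using that by (intro restr_unchanged) (force simp: supp_below_def)
  have "card (restr (A t s) j) < card (restr (A u r) j)"
    if t: "t \<in> {1..Suc m}" and u: "u \<in> {1..Suc m}" and tu: "t < u" and s: "s \<in> S t" and r: "r \<in> S u"
    for t u s r
  proof (cases "u = Suc m")
    case True
    from t tu True have t': "t \<in> {1..m}"
      by auto
    have "card (restr (A t s) i) \<le> card old" "Suc (card old) \<le> card (restr (A u r) j)"
      using old_le[OF t' s] new_large r True by auto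
    then show ?thesis
      using old_unchanged[OF t' s] by simp
  next
    case False
    with t u tu have t': "t \<in> {1..m}" and u': "u \<in> {1..m}"
      by auto
    then have "card (restr (A t s) i) < card (restr (A u r) i)"
      using increasing tu s r unfolding restr_cards_increasing_def by blast
    then show ?thesis
      using old_unchanged[OF t' s] old_unchanged[OF u' r] by simp
  qed
  then have "restr_cards_increasing (Suc m) S A j"
    unfolding restr_cards_increasing_def by blast
  with j show ?thesis
    by (rule that)
qed

lemma exists_restr_cards_increasing:
  assumes i0: "finite i0"
    and S: "\<forall>t\<in>{1..m}. finite (S t)"
    and A: "\<forall>t\<in>{1..m}. \<forall>s\<in>S t. finitary (A t s)"
    and fibre: "\<forall>u\<in>{2..m}. \<forall>r\<in>S u. infinite {a\<in>A u r. supp a \<inter> supp_below A S u \<subseteq> i0}"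
  shows "\<exists>i. finite i \<and> i0 \<subseteq> i \<and> restr_cards_increasing m S A i"
  using S A fibre
proof (induction m)
  case 0
  then show ?case
    using i0 by (auto simp: restr_cards_increasing_def)
next
  case (Suc m)
  have "\<forall>t\<in>{1..m}. finite (S t)" "\<forall>t\<in>{1..m}. \<forall>s\<in>S t. finitary (A t s)"
    "\<forall>u\<in>{2..m}. \<forall>r\<in>S u. infinite {a\<in>A u r. supp a \<inter> supp_below A S u \<subseteq> i0}"
    using Suc.prems by auto
  then obtain i where i: "finite i" "i0 \<subseteq> i" and IH: "restr_cards_increasing m S A i"
    using Suc.IH by blast
  show ?case
  proof (cases "m = 0")
    case True
    then show ?thesis
      using i by (auto simp: restr_cards_increasing_def)
  next
    case False
    then have "\<forall>r\<in>S (Suc m). infinite {a\<in>A (Suc m) r. supp a \<inter> supp_below A S (Suc m) \<subseteq> i}"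
      using Suc.prems(3) infinite_supp_inter_subset_mono[OF _ i(2)] by auto
    then obtain j where "finite j" "i \<subseteq> j" "restr_cards_increasing (Suc m) S A j"
      using restr_cards_increasing_extend[OF i(1) IH Suc.prems(1,2)] by blast
    then show ?thesis
      using i(2) by blast
  qed
qed

lemma exists_infinite_supp_below_fibre_of_chain:
  assumes u: "u \<in> {2..n}" and r: "r \<in> S u"
    and Sfin: "\<forall>t\<in>{1..n}. finite (S t)"
    and Acard: "\<forall>t\<in>{1..n}. \<forall>s\<in>S t. (card_of (A t s), \<kappa> t) \<in> ordIso"
    and kCard: "\<forall>t\<in>{1..n}. Card_order (\<kappa> t)"
    and kinf: "\<forall>t\<in>{1..n}. (natLeq, \<kappa> t) \<in> ordLeq"
    and kmono: "\<forall>t\<in>{1..n}. \<forall>u\<in>{1..n}. t < u \<longrightarrow> (\<kappa> t, \<kappa> u) \<in> ordLess"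
  shows "\<exists>F. finite F \<and> infinite {a\<in>A u r. supp a \<inter> supp_below A S u = F}"
proof -
  have u1: "u - 1 \<in> {1..n}"
    using u by auto
  have k_le: "(\<kappa> t, \<kappa> (u - 1)) \<in> ordLeq" if t: "t \<in> {1..<u}" for t
  proof (cases "t = u - 1")
    case True
    then show ?thesis
      using kCard u1 ordLeq_reflexive card_order_on_well_order_on by metis
  next
    case False
    then have "t < u - 1" "t \<in> {1..n}"
      using t u by auto
    then show ?thesis
      using u1 kmono ordLess_imp_ordLeq by blast
  qed
  have A_le: "\<forall>t\<in>{1..<u}. \<forall>s\<in>S t. (card_of (A t s), \<kappa> (u - 1)) \<in> ordLeq"
  proof (intro ballI)
    fix t s assume t: "t \<in> {1..<u}" and s: "s \<in> S t"
    then have "(card_of (A t s), \<kappa> t) \<in> ordIso"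
      using u Acard by auto
    then show "(card_of (A t s), \<kappa> (u - 1)) \<in> ordLeq"
      using k_le[OF t] ordIso_ordLeq_trans by blast
  qed
  have "u \<in> {1..n}"
    using u by auto
  then have "(\<kappa> (u - 1), \<kappa> u) \<in> ordLess" "(card_of (A u r), \<kappa> u) \<in> ordIso"
    using u1 r kmono Acard by auto
  then have less_A: "(\<kappa> (u - 1), card_of (A u r)) \<in> ordLess"
    using ordLess_ordIso_trans ordIso_symmetric by blast
  have S_fin: "\<forall>t\<in>{1..<u}. finite (S t)"
    using u Sfin by auto
  show ?thesis
    using exists_infinite_supp_below_fibre[OF _ _ S_fin A_le less_A] kCard kinf u1 by blast
qed

lemma exists_restr_ordLess_of_fibres:
  assumes d: "finite d"
    and Sfin: "\<forall>t\<in>{1..n}. finite (S t)"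
    and AW: "\<forall>t\<in>{1..n}. \<forall>s\<in>S t. finitary (A t s)"
    and fibre_exists: "\<forall>u\<in>{2..n}. \<forall>r\<in>S u.
      \<exists>F. finite F \<and> infinite {a\<in>A u r. supp a \<inter> supp_below A S u = F}"
  shows "\<exists>i. finite i \<and> d \<subseteq> i \<and>
    (\<forall>t\<in>{1..n}. \<forall>u\<in>{1..n}. t < u \<longrightarrow>
       (\<forall>s\<in>S t. \<forall>r\<in>S u. (card_of (restr (A t s) i), card_of (restr (A u r) i)) \<in> ordLess))"
proof -
  define F where "F u r = (SOME F. finite F \<and> infinite {a\<in>A u r. supp a \<inter> supp_below A S u = F})"
    for u r
  have F: "finite (F u r) \<and> infinite {a\<in>A u r. supp a \<inter> supp_below A S u = F u r}"
    if "u \<in> {2..n}" "r \<in> S u" for u r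
    unfolding F_def by (rule someI_ex[OF fibre_exists[rule_format, OF that]])
  define i0 where "i0 = d \<union> (\<Union>u\<in>{2..n}. \<Union>r\<in>S u. F u r)"
  have "finite i0"
    unfolding i0_def using d F Sfin by auto
  moreover have "infinite {a\<in>A u r. supp a \<inter> supp_below A S u \<subseteq> i0}"
    if "u \<in> {2..n}" "r \<in> S u" for u r
  proof -
    have "F u r \<subseteq> i0"
      unfolding i0_def using that by blast
    then show ?thesis
      using F[OF that] by (auto elim!: infinite_super[rotated])
  qed
  ultimately obtain i where i: "finite i" "i0 \<subseteq> i" and increasing: "restr_cards_increasing n S A i"
    using exists_restr_cards_increasing[of i0 n S A] Sfin AW by blast
  show ?thesis
  proof (intro exI[of _ i] conjI ballI impI)
    show "finite i" "d \<subseteq> i"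
      using i unfolding i0_def by auto
    fix t u s r assume tu: "t \<in> {1..n}" "u \<in> {1..n}" "t < u" and sr: "s \<in> S t" "r \<in> S u"
    have "finite (restr (A t s) i)" "finite (restr (A u r) i)"
      using finite_restr[OF AW[rule_format] i(1)] tu sr by blast+
    moreover have "card (restr (A t s) i) < card (restr (A u r) i)"
      using increasing tu sr unfolding restr_cards_increasing_def by blast
    ultimately show "(card_of (restr (A t s) i), card_of (restr (A u r) i)) \<in> ordLess"
      by (rule finite_card_of_iff_card3[THEN iffD2])
  qed
qed

theorem mainTheorem8:
  fixes S :: "nat \<Rightarrow> 'b set"
    and A :: "nat \<Rightarrow> 'b \<Rightarrow> 'a pt set"
    and \<kappa> :: "nat \<Rightarrow> 'c rel"
    and d :: "'a set" and n :: nat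
  assumes infL: "infinite (UNIV :: 'a set)"
    and d: "finite d"
    and n: "n \<ge> 1"
    and Sfin: "\<forall>t\<in>{1..n}. finite (S t)"
    and AW: "\<forall>t\<in>{1..n}. \<forall>s\<in>S t. finitary (A t s)"
    and Acard: "\<forall>t\<in>{1..n}. \<forall>s\<in>S t. (card_of (A t s), \<kappa> t) \<in> ordIso"
    and kCard: "\<forall>t\<in>{1..n}. Card_order (\<kappa> t)"
    and kinf: "\<forall>t\<in>{1..n}. (natLeq, \<kappa> t) \<in> ordLeq"
    and kmono: "\<forall>t\<in>{1..n}. \<forall>u\<in>{1..n}. t < u \<longrightarrow> (\<kappa> t, \<kappa> u) \<in> ordLess"
    and kle: "\<forall>t\<in>{1..n}. (\<kappa> t, card_of (UNIV :: 'a set)) \<in> ordLeq"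
  shows "\<exists>i. finite i \<and> d \<subseteq> i \<and>
    (\<forall>t\<in>{1..n}. \<forall>u\<in>{1..n}. t < u \<longrightarrow>
       (\<forall>s\<in>S t. \<forall>r\<in>S u. (card_of (restr (A t s) i), card_of (restr (A u r) i)) \<in> ordLess))"
proof -
  have "\<forall>u\<in>{2..n}. \<forall>r\<in>S u. \<exists>F. finite F \<and> infinite {a\<in>A u r. supp a \<inter> supp_below A S u = F}"
    using exists_infinite_supp_below_fibre_of_chain[OF _ _ Sfin Acard kCard kinf kmono] by blast
  with d Sfin AW show ?thesis
    by (rule exists_restr_ordLess_of_fibres)
qed

end
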